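(* For all integers $k \geq 2$, $\nu_2(P_kQ_k - k) \geq 2$, i.e., $4$ divides $P_kQ_k - k$.
   Context: The Pell sequence $(P_n)_{n\ge0}$ is defined by $P_0=0$, $P_1=1$, $P_n = 2P_{n-1}+P_{n-2}$. The associated Pell sequence $(Q_n)_{n\ge0}$ is defined by $Q_0=1$, $Q_1=1$, $Q_n=2Q_{n-1}+Q_{n-2}$. For a prime $p$ and a nonzero integer $n$, $\nu_p(n)$ denotes the $p$-adic valuation of $n$, the largest nonnegative integer $j$ such that $p^j$ divides $n$ (with $\nu_p(0)=\infty$). *)

theory Defs
  imports Main
begin

fun pell :: "nat \<Rightarrow> int" where
  "pell 0 = 0"
| "pell (Suc 0) = 1"
| "pell (Suc (Suc n)) = 2 * pell (Suc n) + pell n"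

fun pell_assoc :: "nat \<Rightarrow> int" where
  "pell_assoc 0 = 1"
| "pell_assoc (Suc 0) = 1"
| "pell_assoc (Suc (Suc n)) = 2 * pell_assoc (Suc n) + pell_assoc n"

end

theory Submission
  imports Defs "HOL-Number_Theory.Cong"
begin

text \<open>Modulo 4 both sequences have period 4: P runs through 0, 1, 2, 1 and Q through
  1, 1, 3, 3, so P(k) Q(k) runs through 0, 1, 2, 3 and agrees with k. The period comes from the
  four-step recurrence x(n+4) = 12 x(n+1) + 5 x(n) satisfied by both sequences. The congruence
  thus holds for every k.\<close>

lemma pell_add_4: "pell (n + 4) = 12 * pell (Suc n) + 5 * pell n"
  by (simp add: numeral_eq_Suc)

lemma pell_assoc_add_4: "pell_assoc (n + 4) = 12 * pell_assoc (Suc n) + 5 * pell_assoc n"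
  by (simp add: numeral_eq_Suc)

lemma cong_12_5_mod_4: "[12 * a + 5 * b = b] (mod (4::int))"
  unfolding cong_def by presburger

lemma pell_add_4_cong: "[pell (n + 4) = pell n] (mod 4)"
  unfolding pell_add_4 by (rule cong_12_5_mod_4)

lemma pell_assoc_add_4_cong: "[pell_assoc (n + 4) = pell_assoc n] (mod 4)"
  unfolding pell_assoc_add_4 by (rule cong_12_5_mod_4)

lemma pell_mult_pell_assoc_cong: "[pell k * pell_assoc k = int k] (mod 4)"
proof (induction k rule: less_induct)
  case (less k)
  show ?case
  proof (cases "k < 4")
    case True
    then have "k = 0 \<or> k = 1 \<or> k = 2 \<or> k = 3" by auto
    then show ?thesis by (auto simp: numeral_eq_Suc cong_def)
  next
    case False
    then obtain n where k: "k = n + 4" by (metis add.commute le_Suc_ex not_less)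
    have "[pell k * pell_assoc k = pell n * pell_assoc n] (mod 4)"
      unfolding k by (intro cong_mult pell_add_4_cong pell_assoc_add_4_cong)
    also have "[pell n * pell_assoc n = int n] (mod 4)"
      using less k by simp
    also have "[int n = int k] (mod 4)"
      unfolding k by (simp add: cong_def)
    finally show ?thesis .
  qed
qed

theorem lemma27:
  fixes k :: nat
  assumes "k \<ge> 2"
  shows "(4::int) dvd (pell k * pell_assoc k - int k)"
  using pell_mult_pell_assoc_cong[of k] by (simp add: cong_iff_dvd_diff)

end
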